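(* For every $\xi\in\mathbb R^3\setminus\{0\}$, all eigenvalues of the matrix $$A(\xi)=\begin{pmatrix}0&|\xi|&0&0\\-|\xi|&\nu|\xi|^2&-|\xi|&-\frac{1}{3\mathcal C}|\xi|\\0&\frac23|\xi|&\frac23\kappa|\xi|^2+\frac{2\gamma}{3}&-\frac23 b_0\\0&0&-\mathcal C\gamma&a|\xi|^2+\mathcal Cb_0\end{pmatrix}$$ have strictly positive real part. Equivalently, writing $\varrho=|\xi|$ and $\det(A-\lambda I)=\lambda^4-a_1\lambda^3+a_2\lambda^2-a_3\lambda+a_4$, one has $a_1>0$, $A_2:=a_1a_2-a_3>0$ and $A_3:=a_3(a_1a_2-a_3)-a_1^2a_4>0$ for all $\varrho>0$, where $$a_1=(a+\tfrac23\kappa+\nu)\varrho^2+\tfrac{2\gamma}{3}+\mathcal Cb_0,$$ $$a_2=\Big[(\nu a+\tfrac23\nu\kappa+\tfrac23a\kappa)\varrho^2+\tfrac{2\gamma\nu}{3}+\mathcal Cb_0\nu+\tfrac{2\gamma a}{3}+\tfrac{2\kappa\mathcal Cb_0}{3}+\tfrac53\Big]\varrho^2,$$ $$a_3=\Big[\tfrac23a\kappa\nu\varrho^4+\big(\tfrac{2(\gamma a+\kappa\mathcal Cb_0)\nu}{3}+\tfrac{5a}{3}+\tfrac{2\kappa}{3}\big)\varrho^2+\tfrac53\mathcal Cb_0+\tfrac{8\gamma}{9}\Big]\varrho^2,$$ $$a_4=\tfrac23\big(a\kappa\varrho^2+a\gamma+\kappa\mathcal Cb_0\big)\varrho^4.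$$
   Context: Constants: $\mathcal C,\mathcal L,\sigma_a,\sigma_s>0$, $\mu>0$, $\lambda=\zeta-\frac23\mu$ with $\zeta\ge0$, $\kappa>0$, $b'(1)>0$ (derivative at $1$ of a given smooth function $b$). Set $\nu=\lambda+2\mu$, $\gamma=\mathcal L\sigma_a b'(1)$, $a=\frac{\mathcal C}{3\mathcal L(\sigma_a+\sigma_s)}$, $b_0=\mathcal L\sigma_a$. The matrix $A(\xi)$ is the Fourier symbol of the linearized (compressible part of the) diffusion approximation radiation hydrodynamics system in the variables $(\hat\rho,\hat d,\hat\theta,\hat j_0)$ with $d=\Lambda^{-1}\mathrm{div}\,u$, $\Lambda=(-\Delta)^{1/2}$. *)

theory Defs
  imports "HOL-Analysis.Analysis"
begin

definition cplx_mat :: "real^'n^'m \<Rightarrow> complex^'n^'m" where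
  "cplx_mat M = (\<chi> i j. complex_of_real (M $ i $ j))"

definition is_eigenvalue :: "complex^'n^'n \<Rightarrow> complex \<Rightarrow> bool" where
  "is_eigenvalue M c \<longleftrightarrow> (\<exists>v. v \<noteq> 0 \<and> M *v v = c *s v)"

definition A_sym :: "real \<Rightarrow> real \<Rightarrow> real \<Rightarrow> real \<Rightarrow> real \<Rightarrow> real
     \<Rightarrow> real^3 \<Rightarrow> real^4^4" where
  "A_sym nu kappa gamma a b0 CC xi =
     (let r = norm xi in
      vector [ vector [0, r, 0, 0],
               vector [- r, nu * r^2, - r, - (1 / (3 * CC)) * r],
               vector [0, 2/3 * r, 2/3 * kappa * r^2 + 2 * gamma / 3, - 2/3 * b0],
               vector [0, 0, - CC * gamma, a * r^2 + CC * b0] ])"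

end

theory Submission
  imports Defs
begin

text \<open>
  After substituting \<open>w = -\<lambda>\<close>, an eigenvalue \<open>\<lambda>\<close> of \<open>A(\<xi>)\<close> is a root of the real quartic
  \<open>w\<^sup>4 + a\<^sub>1 w\<^sup>3 + a\<^sub>2 w\<^sup>2 + a\<^sub>3 w + a\<^sub>4\<close>; eliminating the components of an eigenvector
  shows that this polynomial annihilates each of them, so no determinant is needed.
  With \<open>B = \<C> b\<^sub>0\<close>, the coefficients \<open>a\<^sub>1\<close>, \<open>a\<^sub>4\<close> and the Hurwitz determinants
  \<open>a\<^sub>1a\<^sub>2 - a\<^sub>3\<close>, \<open>a\<^sub>3(a\<^sub>1a\<^sub>2 - a\<^sub>3) - a\<^sub>1\<^sup>2a\<^sub>4\<close> expand to polynomials with positive coefficients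
  in the positive quantities \<open>\<nu>, \<kappa>, \<gamma>, a, B, |\<xi>|\<close>.
  The Routh--Hurwitz criterion for quartics then forces \<open>Re w < 0\<close>.  It is proved by an
  energy argument: the Euclidean (Routh) chain \<open>g\<^sub>0, \<dots>, g\<^sub>4\<close> of even and odd parts satisfies
  \<open>g\<^sub>k - g\<^sub>k\<^sub>+\<^sub>2 = \<beta>\<^sub>k w g\<^sub>k\<^sub>+\<^sub>1\<close> with \<open>\<beta>\<^sub>k > 0\<close>, and telescoping \<open>Re (g\<^sub>k conj g\<^sub>k\<^sub>+\<^sub>1)\<close> gives
  \<open>Re w \<cdot> \<Sum> \<beta>\<^sub>k |g\<^sub>k\<^sub>+\<^sub>1|\<^sup>2 = -|g\<^sub>1|\<^sup>2\<close> at a root.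
\<close>

definition char_coeff1 :: "'a::field \<Rightarrow> 'a \<Rightarrow> 'a \<Rightarrow> 'a \<Rightarrow> 'a \<Rightarrow> 'a \<Rightarrow> 'a" where
  "char_coeff1 nu kappa gamma a B r = (a + 2/3*kappa + nu)*r^2 + 2/3*gamma + B"

definition char_coeff2 :: "'a::field \<Rightarrow> 'a \<Rightarrow> 'a \<Rightarrow> 'a \<Rightarrow> 'a \<Rightarrow> 'a \<Rightarrow> 'a" where
  "char_coeff2 nu kappa gamma a B r =
     ((nu*a + 2/3*nu*kappa + 2/3*a*kappa)*r^2 + 2/3*gamma*nu + B*nu + 2/3*gamma*a
       + 2/3*kappa*B + 5/3)*r^2"

definition char_coeff3 :: "'a::field \<Rightarrow> 'a \<Rightarrow> 'a \<Rightarrow> 'a \<Rightarrow> 'a \<Rightarrow> 'a \<Rightarrow> 'a" where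
  "char_coeff3 nu kappa gamma a B r =
     (2/3*a*kappa*nu*r^4 + (2/3*(gamma*a + kappa*B)*nu + 5/3*a + 2/3*kappa)*r^2
       + 5/3*B + 8/9*gamma)*r^2"

definition char_coeff4 :: "'a::field \<Rightarrow> 'a \<Rightarrow> 'a \<Rightarrow> 'a \<Rightarrow> 'a \<Rightarrow> 'a \<Rightarrow> 'a" where
  "char_coeff4 nu kappa gamma a B r = 2/3*(a*kappa*r^2 + a*gamma + kappa*B)*r^4"

lemmas char_coeff_defs = char_coeff1_def char_coeff2_def char_coeff3_def char_coeff4_def

lemma of_real_char_coeff:
  fixes nu kappa gamma a B r :: real
  defines "f \<equiv> of_real :: real \<Rightarrow> 'a::real_field"
  shows "f (char_coeff1 nu kappa gamma a B r) = char_coeff1 (f nu) (f kappa) (f gamma) (f a) (f B) (f r)"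
    and "f (char_coeff2 nu kappa gamma a B r) = char_coeff2 (f nu) (f kappa) (f gamma) (f a) (f B) (f r)"
    and "f (char_coeff3 nu kappa gamma a B r) = char_coeff3 (f nu) (f kappa) (f gamma) (f a) (f B) (f r)"
    and "f (char_coeff4 nu kappa gamma a B r) = char_coeff4 (f nu) (f kappa) (f gamma) (f a) (f B) (f r)"
  unfolding f_def char_coeff_defs by simp_all

lemma Re_mult_cnj_diff:
  fixes x y g w :: complex and \<beta> :: real
  assumes "x - y = of_real \<beta> * w * g"
  shows "Re (x * cnj g) - Re (y * cnj g) = \<beta> * Re w * (cmod g)^2"
proof -
  have "x * cnj g = y * cnj g + of_real \<beta> * w * (g * cnj g)"
    using assms by (simp add: algebra_simps eq_diff_eq)
  also have "g * cnj g = of_real ((cmod g)^2)"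
    by (simp add: complex_mult_cnj cmod_power2)
  finally have "x * cnj g = y * cnj g + of_real (\<beta> * (cmod g)^2) * w"
    by simp
  then show ?thesis by simp
qed

lemma routh_chain_Re_neg:
  fixes w g0 g1 g2 g3 g4 :: complex and \<beta>1 \<beta>2 \<beta>3 \<beta>4 :: real
  assumes pos: "\<beta>1 > 0" "\<beta>2 > 0" "\<beta>3 > 0" "\<beta>4 > 0"
    and root: "g0 = - g1"
    and R1: "g0 - g2 = of_real \<beta>1 * w * g1"
    and R2: "g1 - g3 = of_real \<beta>2 * w * g2"
    and R3: "g2 - g4 = of_real \<beta>3 * w * g3"
    and R4: "g3 - 0 = of_real \<beta>4 * w * g4"
    and "g4 \<noteq> 0"
  shows "Re w < 0"
proof -
  define S where
    "S = \<beta>1 * (cmod g1)^2 + \<beta>2 * (cmod g2)^2 + \<beta>3 * (cmod g3)^2 + \<beta>4 * (cmod g4)^2"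
  have S_pos: "S > 0"
    unfolding S_def using pos \<open>g4 \<noteq> 0\<close>
    by (intro add_nonneg_pos) (auto intro!: add_nonneg_nonneg mult_nonneg_nonneg)
  have cnj_sym: "Re (x * cnj y) = Re (y * cnj x)" for x y :: complex
    by simp
  have "Re (g0 * cnj g1) = Re w * S"
    using Re_mult_cnj_diff[OF R1] Re_mult_cnj_diff[OF R2] Re_mult_cnj_diff[OF R3]
      Re_mult_cnj_diff[OF R4] cnj_sym[of g2 g1] cnj_sym[of g3 g2] cnj_sym[of g4 g3]
    unfolding S_def by (simp add: algebra_simps)
  moreover have "Re (g0 * cnj g1) = - ((cmod g1)^2)"
    using root by (simp add: complex_mult_cnj cmod_power2)
  ultimately have energy: "Re w * S = - ((cmod g1)^2)"
    by simp
  show ?thesis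
  proof (rule ccontr)
    assume "\<not> Re w < 0"
    then have "Re w * S \<ge> 0"
      using S_pos by simp
    with energy have "g1 = 0"
      by (simp add: power2_eq_square mult_le_0_iff)
    then have "g2 = 0"
      using R1 root by simp
    then have "g3 = 0"
      using R2 \<open>g1 = 0\<close> by simp
    then have "g4 = 0"
      using R3 \<open>g2 = 0\<close> by simp
    with \<open>g4 \<noteq> 0\<close> show False ..
  qed
qed

lemma quartic_root_Re_neg:
  fixes w :: complex and a1 a2 a3 a4 :: real
  assumes a1: "a1 > 0" and hurwitz2: "a1*a2 - a3 > 0"
    and hurwitz3: "a3*(a1*a2 - a3) - a1^2*a4 > 0" and a4: "a4 > 0"
    and root: "w^4 + of_real a1 * w^3 + of_real a2 * w^2 + of_real a3 * w + of_real a4 = 0"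
  shows "Re w < 0"
proof -
  define c where "c = (a1*a2 - a3)/a1"
  define d where "d = (a3*(a1*a2 - a3) - a1^2*a4)/(a1*a2 - a3)"
  have "c > 0" "d > 0"
    unfolding c_def d_def using a1 hurwitz2 hurwitz3 by simp_all
  have a2_eq: "a2 = c + a3/a1"
    unfolding c_def using a1 by (simp add: field_simps)
  have "a3 - d = a1*a4/c"
    unfolding d_def c_def using a1 hurwitz2 by (simp add: field_simps power2_eq_square)
  then have a3_eq: "a3 = d + a1*a4/c"
    by simp
  show ?thesis
  proof (rule routh_chain_Re_neg)
    show "1/a1 > 0" "a1/c > 0" "c/d > 0" "d/a4 > 0"
      using a1 a4 \<open>c > 0\<close> \<open>d > 0\<close> by simp_all
    show "w^4 + of_real a2 * w^2 + of_real a4 = - (of_real a1 * w^3 + of_real a3 * w)"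
      using root by (simp add: algebra_simps eq_neg_iff_add_eq_0)
    show "w^4 + of_real a2 * w^2 + of_real a4 - (of_real c * w^2 + of_real a4)
        = of_real (1/a1) * w * (of_real a1 * w^3 + of_real a3 * w)"
      using a1 unfolding a2_eq
      by (simp add: field_simps power2_eq_square power3_eq_cube power4_eq_xxxx)
    show "of_real a1 * w^3 + of_real a3 * w - of_real d * w
        = of_real (a1/c) * w * (of_real c * w^2 + of_real a4)"
      using \<open>c > 0\<close> unfolding a3_eq
      by (simp add: field_simps power2_eq_square power3_eq_cube)
    show "of_real c * w^2 + of_real a4 - of_real a4 = of_real (c/d) * w * (of_real d * w)"
      using \<open>d > 0\<close> by (simp add: power2_eq_square)
    show "of_real d * w - 0 = of_real (d/a4) * w * of_real a4"
      using a4 by simp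
    show "(of_real a4 :: complex) \<noteq> 0"
      using a4 by simp
  qed
qed

lemma char_coeff_pos:
  fixes nu kappa gamma a B r :: real
  assumes "nu > 0" "kappa > 0" "gamma > 0" "a > 0" "B > 0" "r > 0"
  shows "char_coeff1 nu kappa gamma a B r > 0" and "char_coeff4 nu kappa gamma a B r > 0"
  unfolding char_coeff_defs using assms by (intro add_pos_pos mult_pos_pos zero_less_power; simp)+

lemma hurwitz_det2_pos:
  fixes nu kappa gamma a B r :: real
  assumes "nu > 0" "kappa > 0" "gamma > 0" "a > 0" "B > 0" "r > 0"
  defines "a1 \<equiv> char_coeff1 nu kappa gamma a B r"
    and "a2 \<equiv> char_coeff2 nu kappa gamma a B r"
    and "a3 \<equiv> char_coeff3 nu kappa gamma a B r"
  shows "a1*a2 - a3 > 0"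
proof -
  have "a1*a2 - a3 =
      r^2 * ((2/9*gamma + 2/3*gamma*a*B + 4/9*gamma^2*a + 2/3*kappa*B^2 + 4/9*kappa*gamma*B + nu*B^2 + 4/3*nu*gamma*B + 4/9*nu*gamma^2)
       + (2/3*gamma*a^2 + 4/9*kappa + 4/3*kappa*a*B + 8/9*kappa*gamma*a + 4/9*kappa^2*B + 5/3*nu + 2*nu*a*B + 4/3*nu*gamma*a + 4/3*nu*kappa*B + 8/9*nu*kappa*gamma + nu^2*B + 2/3*nu^2*gamma) * r^2
       + (2/3*kappa*a^2 + 4/9*kappa^2*a + nu*a^2 + 4/3*nu*kappa*a + 4/9*nu*kappa^2 + nu^2*a + 2/3*nu^2*kappa) * r^4)"
    unfolding a1_def a2_def a3_def char_coeff_defs by algebra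
  also have "\<dots> > 0"
    using assms by (intro add_pos_pos mult_pos_pos zero_less_power; simp)
  finally show ?thesis .
qed

lemma hurwitz_det3_pos:
  fixes nu kappa gamma a B r :: real
  assumes "nu > 0" "kappa > 0" "gamma > 0" "a > 0" "B > 0" "r > 0"
  defines "a1 \<equiv> char_coeff1 nu kappa gamma a B r"
    and "a2 \<equiv> char_coeff2 nu kappa gamma a B r"
    and "a3 \<equiv> char_coeff3 nu kappa gamma a B r"
    and "a4 \<equiv> char_coeff4 nu kappa gamma a B r"
  shows "a3*(a1*a2 - a3) - a1^2*a4 > 0"
proof -
  have "a3*(a1*a2 - a3) - a1^2*a4 =
      r^4 * ((10/27*gamma*B + 4/9*gamma*a*B^2 + 16/81*gamma^2 + 4/9*gamma^2*a*B + 8/81*gamma^3*a + 4/9*kappa*B^3 + 4/9*kappa*gamma*B^2 + 8/81*kappa*gamma^2*B + 5/3*nu*B^3 + 28/9*nu*gamma*B^2 + 52/27*nu*gamma^2*B + 32/81*nu*gamma^3)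
       + (10/27*gamma*a + 8/9*gamma*a^2*B + 4/9*gamma^2*a^2 + 20/27*kappa*B + 4/3*kappa*a*B^2 + 44/81*kappa*gamma + 32/27*kappa*gamma*a*B + 16/81*kappa*gamma^2*a + 8/27*kappa^2*B^2 + 8/81*kappa^2*gamma*B + 25/9*nu*B + 5*nu*a*B^2 + 40/27*nu*gamma + 44/9*nu*gamma*a*B + 32/27*nu*gamma^2*a + 4/9*nu*gamma^2*a^2*B + 8/27*nu*gamma^3*a^2 + 14/9*nu*kappa*B^2 + 76/27*nu*kappa*gamma*B + 8/9*nu*kappa*gamma*a*B^2 + 88/81*nu*kappa*gamma^2 + 16/27*nu*kappa*gamma^2*a*B + 4/9*nu*kappa^2*B^3 + 8/27*nu*kappa^2*gamma*B^2 + 5/3*nu^2*B^2 + 2*nu^2*gamma*B + 2/3*nu^2*gamma*a*B^2 + 16/27*nu^2*gamma^2 + 8/9*nu^2*gamma^2*a*B + 8/27*nu^2*gamma^3*a + 2/3*nu^2*kappa*B^3 + 8/9*nu^2*kappa*gamma*B^2 + 8/27*nu^2*kappa*gamma^2*B) * r^2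
       + (4/9*gamma*a^3 + 20/27*kappa*a + 4/3*kappa*a^2*B + 20/27*kappa*gamma*a^2 + 8/27*kappa^2 + 16/27*kappa^2*a*B + 8/81*kappa^2*gamma*a + 25/9*nu*a + 5*nu*a^2*B + 16/9*nu*gamma*a^2 + 4/9*nu*gamma^2*a^3 + 10/9*nu*kappa + 28/9*nu*kappa*a*B + 20/9*nu*kappa*gamma*a + 16/9*nu*kappa*gamma*a^2*B + 8/9*nu*kappa*gamma^2*a^2 + 28/27*nu*kappa^2*B + 4/3*nu*kappa^2*a*B^2 + 80/81*nu*kappa^2*gamma + 32/27*nu*kappa^2*gamma*a*B + 8/27*nu*kappa^3*B^2 + 10/3*nu^2*a*B + 22/9*nu^2*gamma*a + 4/3*nu^2*gamma*a^2*B + 8/9*nu^2*gamma^2*a^2 + 20/9*nu^2*kappa*B + 2*nu^2*kappa*a*B^2 + 28/27*nu^2*kappa*gamma + 8/3*nu^2*kappa*gamma*a*B + 8/9*nu^2*kappa*gamma^2*a + 8/9*nu^2*kappa^2*B^2 + 16/27*nu^2*kappa^2*gamma*B + 2/3*nu^3*gamma*a*B + 4/9*nu^3*gamma^2*a + 2/3*nu^3*kappa*B^2 + 4/9*nu^3*kappa*gamma*B) * r^4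
       + (4/9*kappa*a^3 + 8/27*kappa^2*a^2 + 5/3*nu*a^3 + 14/9*nu*kappa*a^2 + 8/9*nu*kappa*gamma*a^3 + 28/27*nu*kappa^2*a + 4/3*nu*kappa^2*a^2*B + 8/9*nu*kappa^2*gamma*a^2 + 8/27*nu*kappa^3 + 16/27*nu*kappa^3*a*B + 5/3*nu^2*a^2 + 2/3*nu^2*gamma*a^3 + 20/9*nu^2*kappa*a + 2*nu^2*kappa*a^2*B + 16/9*nu^2*kappa*gamma*a^2 + 4/9*nu^2*kappa^2 + 16/9*nu^2*kappa^2*a*B + 8/9*nu^2*kappa^2*gamma*a + 8/27*nu^2*kappa^3*B + 2/3*nu^3*gamma*a^2 + 4/3*nu^3*kappa*a*B + 8/9*nu^3*kappa*gamma*a + 4/9*nu^3*kappa^2*B) * r^6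
       + (4/9*nu*kappa^2*a^3 + 8/27*nu*kappa^3*a^2 + 2/3*nu^2*kappa*a^3 + 8/9*nu^2*kappa^2*a^2 + 8/27*nu^2*kappa^3*a + 2/3*nu^3*kappa*a^2 + 4/9*nu^3*kappa^2*a) * r^8)"
    unfolding a1_def a2_def a3_def a4_def char_coeff_defs by algebra
  also have "\<dots> > 0"
    using assms by (intro add_pos_pos mult_pos_pos zero_less_power; simp)
  finally show ?thesis .
qed

lemma char_poly_annihilates_eigenvector:
  fixes z r nu kappa gamma a b0 C e v1 v2 v3 v4 :: complex
  assumes "e * C = 1/3"
    and "z * v1 = r * v2"
    and "z * v2 = - r * v1 + nu * r^2 * v2 - r * v3 - e * r * v4"
    and "z * v3 = 2/3 * r * v2 + (2/3 * kappa * r^2 + 2/3 * gamma) * v3 - 2/3 * b0 * v4"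
    and "z * v4 = - C * gamma * v3 + (a * r^2 + C * b0) * v4"
  defines "P \<equiv> (-z)^4 + char_coeff1 nu kappa gamma a (C*b0) r * (-z)^3
      + char_coeff2 nu kappa gamma a (C*b0) r * (-z)^2
      + char_coeff3 nu kappa gamma a (C*b0) r * (-z) + char_coeff4 nu kappa gamma a (C*b0) r"
  shows "P * v1 = 0" and "P * v2 = 0" and "P * v3 = 0" and "P * v4 = 0"
  using assms unfolding char_coeff_defs by algebra+

lemma vector_4_nth [simp]:
  "(vector [x1, x2, x3, x4] :: 'a::zero^4) $ 1 = x1"
  "(vector [x1, x2, x3, x4] :: 'a::zero^4) $ 2 = x2"
  "(vector [x1, x2, x3, x4] :: 'a::zero^4) $ 3 = x3"
  "(vector [x1, x2, x3, x4] :: 'a::zero^4) $ 4 = x4"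
  unfolding vector_def by simp_all

lemma A_sym_eigenvector_rows:
  fixes nu kappa gamma a b0 CC :: real and xi :: "real^3" and z :: complex
  assumes "cplx_mat (A_sym nu kappa gamma a b0 CC xi) *v v = z *s v"
  defines "r \<equiv> complex_of_real (norm xi)"
  shows "z * v$1 = r * v$2"
    and "z * v$2 = - r * v$1 + of_real nu * r^2 * v$2 - r * v$3
      - of_real (1 / (3 * CC)) * r * v$4"
    and "z * v$3 = 2/3 * r * v$2
      + (2/3 * of_real kappa * r^2 + 2/3 * of_real gamma) * v$3 - 2/3 * of_real b0 * v$4"
    and "z * v$4 = - of_real CC * of_real gamma * v$3
      + (of_real a * r^2 + of_real CC * of_real b0) * v$4"
proof -
  have row: "(cplx_mat (A_sym nu kappa gamma a b0 CC xi) *v v) $ i = z * v $ i" for i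
    by (simp add: assms(1))
  note entries = matrix_vector_mult_def sum_4 cplx_mat_def A_sym_def Let_def r_def
  show "z * v$1 = r * v$2"
    using row[of 1] by (simp add: entries)
  show "z * v$2 = - r * v$1 + of_real nu * r^2 * v$2 - r * v$3
      - of_real (1 / (3 * CC)) * r * v$4"
    using row[of 2] by (simp add: entries algebra_simps)
  show "z * v$3 = 2/3 * r * v$2
      + (2/3 * of_real kappa * r^2 + 2/3 * of_real gamma) * v$3 - 2/3 * of_real b0 * v$4"
    using row[of 3] by (simp add: entries algebra_simps)
  show "z * v$4 = - of_real CC * of_real gamma * v$3
      + (of_real a * r^2 + of_real CC * of_real b0) * v$4"
    using row[of 4] by (simp add: entries algebra_simps)
qed

lemma A_sym_eigenvalue_Re_pos:
  fixes nu kappa gamma a b0 CC :: real and xi :: "real^3" and z :: complex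
  assumes pos: "nu > 0" "kappa > 0" "gamma > 0" "a > 0" "b0 > 0" "CC > 0"
    and "xi \<noteq> 0"
    and "is_eigenvalue (cplx_mat (A_sym nu kappa gamma a b0 CC xi)) z"
  shows "Re z > 0"
proof -
  define r where "r = norm xi"
  have "r > 0"
    using \<open>xi \<noteq> 0\<close> unfolding r_def by simp
  obtain v where "v \<noteq> 0" and eigen: "cplx_mat (A_sym nu kappa gamma a b0 CC xi) *v v = z *s v"
    using assms unfolding is_eigenvalue_def by blast
  have "complex_of_real (1 / (3 * CC)) * of_real CC = 1/3"
    using \<open>CC > 0\<close> by (simp add: field_simps)
  note annihilates = char_poly_annihilates_eigenvector[OF this A_sym_eigenvector_rows[OF eigen],
      folded r_def]
  define P where "P = (-z)^4 + of_real (char_coeff1 nu kappa gamma a (CC*b0) r) * (-z)^3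
      + of_real (char_coeff2 nu kappa gamma a (CC*b0) r) * (-z)^2
      + of_real (char_coeff3 nu kappa gamma a (CC*b0) r) * (-z)
      + of_real (char_coeff4 nu kappa gamma a (CC*b0) r)"
  have "P * v$i = 0" for i
    using annihilates exhaust_4[of i] unfolding P_def of_real_char_coeff by auto
  with \<open>v \<noteq> 0\<close> have "P = 0"
    by (metis vec_eq_iff zero_index mult_eq_0_iff)
  have "CC * b0 > 0"
    using pos by simp
  note hyps = pos(1-4) this \<open>r > 0\<close>
  have "Re (-z) < 0"
    by (rule quartic_root_Re_neg[OF char_coeff_pos(1)[OF hyps] hurwitz_det2_pos[OF hyps]
          hurwitz_det3_pos[OF hyps] char_coeff_pos(2)[OF hyps]])
      (use \<open>P = 0\<close> in \<open>simp add: P_def\<close>)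
  then show ?thesis
    by simp
qed

theorem mainTheorem5:
  fixes CC LL sigma_a sigma_s mu zeta kappa :: real
    and b :: "real \<Rightarrow> real"
    and xi :: "real^3" and z :: complex
  assumes "CC > 0" "LL > 0" "sigma_a > 0" "sigma_s > 0" "mu > 0" "zeta \<ge> 0" "kappa > 0"
    and "b differentiable (at 1)" "deriv b 1 > 0"
    and "xi \<noteq> 0"
    and "is_eigenvalue
           (cplx_mat (A_sym ((zeta - 2/3 * mu) + 2 * mu) kappa (LL * sigma_a * deriv b 1)
                        (CC / (3 * LL * (sigma_a + sigma_s))) (LL * sigma_a) CC xi)) z"
  shows "Re z > 0"
proof (rule A_sym_eigenvalue_Re_pos[OF _ _ _ _ _ _ \<open>xi \<noteq> 0\<close> assms(11)])
  show "(zeta - 2/3 * mu) + 2 * mu > 0" "LL * sigma_a * deriv b 1 > 0"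
    "CC / (3 * LL * (sigma_a + sigma_s)) > 0" "LL * sigma_a > 0"
    using assms by simp_all
qed (use assms in simp_all)

end
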